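(* Let $n\le m$ and $0<\rho<n$. Every $(n,k)$ linear code over $\mathrm{GF}(q^m)$ with rank covering radius $\rho$ satisfies $$\left\lfloor n-\rho-\frac{\rho(n-\rho)+\sigma(q)}{m}\right\rfloor+1\le k\le n-\rho.$$
   Context: The rank $\mathrm{rk}(\mathbf x)$ of $\mathbf x\in\mathrm{GF}(q^m)^n$ is the maximum number of its coordinates linearly independent over $\mathrm{GF}(q)$, and $d_{\mathrm R}(\mathbf x,\mathbf y)=\mathrm{rk}(\mathbf x-\mathbf y)$. The rank covering radius of a code $C$ is $\max_{\mathbf x}\min_{\mathbf c\in C}d_{\mathrm R}(\mathbf x,\mathbf c)$. An $(n,k)$ linear code is a $k$-dimensional $\mathrm{GF}(q^m)$-subspace of $\mathrm{GF}(q^m)^n$. $\sigma(q)=\frac{1}{\ln q}\sum_{k=1}^\infty\frac{1}{k(q^k-1)}$. *)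

theory Defs
  imports "HOL-Analysis.Analysis"
begin

text \<open>A subfield K of a field of type 'a (here: GF(q) inside GF(q^m)).\<close>
definition is_subfield :: "'a::field set \<Rightarrow> bool" where
  "is_subfield K \<longleftrightarrow> 0 \<in> K \<and> 1 \<in> K \<and>
     (\<forall>x\<in>K. \<forall>y\<in>K. x + y \<in> K \<and> x * y \<in> K) \<and>
     (\<forall>x\<in>K. - x \<in> K \<and> inverse x \<in> K)"

definition lin_indep_over :: "'a::field set \<Rightarrow> ('i \<Rightarrow> 'a) \<Rightarrow> 'i set \<Rightarrow> bool" where
  "lin_indep_over K f S \<longleftrightarrow>
     (\<forall>c. (\<forall>i\<in>S. c i \<in> K) \<and> (\<Sum>i\<in>S. c i * f i) = 0 \<longrightarrow> (\<forall>i\<in>S. c i = 0))"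

definition rk :: "'a::field set \<Rightarrow> 'a ^ 'n \<Rightarrow> nat" where
  "rk K x = Max (card ` {S :: 'n set. lin_indep_over K (\<lambda>i. x $ i) S})"

definition rank_covering_radius :: "'a::field set \<Rightarrow> ('a ^ 'n) set \<Rightarrow> nat" where
  "rank_covering_radius K C = Max ((\<lambda>x. Min ((\<lambda>c. rk K (x - c)) ` C)) ` UNIV)"

definition sigma :: "nat \<Rightarrow> real" where
  "sigma q = (1 / ln (real q)) * (\<Sum>k. 1 / (real (Suc k) * (real q ^ Suc k - 1)))"

end

theory Submission
  imports Defs
begin

text \<open>
  Upper bound: extending a basis of C by standard unit vectors shows that every vector lies within
  Hamming distance n - k of C, and the rank of a vector is at most its Hamming weight.

  Lower bound: the translates of the rank ball B of radius \<rho> by the q^(mk) codewords cover all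
  q^(mn) vectors. The coordinates of a vector in B lie in some \<rho>-dimensional GF(q)-subspace of
  GF(q^m), and double counting such vectors against ordered bases of these subspaces gives
  |B| \<le> q^(\<rho>n) [m choose \<rho>]_q. Finally [m choose \<rho>]_q \<le> q^(\<rho>(m-\<rho>)) \<Prod>_(j=1..\<rho>) 1/(1 - q^-j),
  and expanding each -ln(1 - q^-j) into its power series shows that this product is less than
  q^\<sigma>(q).
\<close>

section \<open>The \<open>q\<close>-binomial coefficient and \<open>\<sigma>(q)\<close>\<close>

lemma sum_power_less_geometric:
  fixes t :: real
  assumes "0 < t" "t < 1"
  shows "(\<Sum>j\<in>{1..r}. t ^ j) < t / (1 - t)"
proof -
  have "(\<Sum>j\<in>{1..r}. t ^ j) = (\<Sum>j<r. t * t ^ j)"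
    by (rule sum.reindex_bij_witness[of _ Suc "\<lambda>j. j - 1"]) (auto simp flip: power_Suc)
  also have "\<dots> < (\<Sum>j. t * t ^ j)"
    using assms by (intro sum_less_suminf summable_mult summable_geometric) auto
  also have "\<dots> = t / (1 - t)"
    using assms by (simp add: suminf_mult suminf_geometric)
  finally show ?thesis .
qed

lemma minus_ln_one_minus_sums:
  fixes x :: real
  assumes "\<bar>x\<bar> < 1"
  shows "(\<lambda>n. x ^ Suc n / real (Suc n)) sums - ln (1 - x)"
proof -
  have "(\<lambda>n. - (x ^ n) / real n) sums ln (1 - x)"
    using ln_series'[of "- x"] assms by simp
  then have "(\<lambda>n. - (x ^ Suc n / real (Suc n))) sums ln (1 - x)"
    using sums_Suc_iff[of "\<lambda>n. - (x ^ n) / real n"] by simp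
  from sums_minus[OF this] show ?thesis by simp
qed

lemma summable_sigma_series:
  assumes "2 \<le> q"
  shows "summable (\<lambda>n. 1 / (real (Suc n) * (real q ^ Suc n - 1)))"
proof (rule summable_comparison_test')
  show "summable (\<lambda>n. (1 / real q) ^ n)"
    using assms by (intro summable_geometric) auto
  show "norm (1 / (real (Suc n) * (real q ^ Suc n - 1))) \<le> (1 / real q) ^ n" for n
  proof -
    have "1 \<le> real q ^ n * (real q - 1)"
      using assms by (intro mult_ge1_I one_le_power) auto
    then have qn: "real q ^ n \<le> real q ^ Suc n - 1"
      by (simp add: algebra_simps)
    have pos: "0 < real q ^ Suc n - 1"
      using qn assms one_le_power[of "real q" n] by linarith
    then have "norm (1 / (real (Suc n) * (real q ^ Suc n - 1))) \<le> 1 / (real q ^ Suc n - 1)"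
      by (simp add: divide_left_mono mult_pos_pos mult_le_cancel_right1)
    also have "\<dots> \<le> 1 / real q ^ n"
      using qn pos assms by (intro divide_left_mono mult_pos_pos) auto
    finally show ?thesis by (simp add: power_one_over)
  qed
qed

text \<open>Expanding each \<open>-ln (1 - q^-j)\<close> into its power series and summing over \<open>j\<close> first, the \<open>n\<close>-th
  term is a geometric sum strictly below \<open>1 / (n (q^n - 1))\<close>.\<close>
lemma sum_minus_ln_less_sigma_series:
  assumes "2 \<le> q"
  shows "(\<Sum>j\<in>{1..r}. - ln (1 - (1 / real q) ^ j))
           < (\<Sum>n. 1 / (real (Suc n) * (real q ^ Suc n - 1)))" (is "_ < suminf ?b")
proof -
  define t where "t = 1 / real q"
  have t: "0 < t" "t < 1" using assms by (auto simp: t_def)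
  define a where "a j n = (t ^ j) ^ Suc n / real (Suc n)" for j n :: nat
  have a_sums: "a j sums - ln (1 - t ^ j)" if "1 \<le> j" for j
    unfolding a_def using t that by (intro minus_ln_one_minus_sums) (simp add: power_less_one_iff)
  have a_less_b: "(\<Sum>j\<in>{1..r}. a j n) < ?b n" for n
  proof -
    have "(t ^ j) ^ Suc n = (t ^ Suc n) ^ j" for j
      by (metis power_mult mult.commute)
    then have "(\<Sum>j\<in>{1..r}. a j n) = (\<Sum>j\<in>{1..r}. (t ^ Suc n) ^ j) / real (Suc n)"
      by (simp only: a_def sum_divide_distrib)
    also have "\<dots> < t ^ Suc n / (1 - t ^ Suc n) / real (Suc n)"
      using t power_less_one_iff[of t "Suc n"]
      by (intro divide_strict_right_mono sum_power_less_geometric) auto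
    also have "\<dots> = ?b n"
      using assms by (simp add: t_def field_simps)
    finally show ?thesis .
  qed
  have diff_sums: "(\<lambda>n. ?b n - (\<Sum>j\<in>{1..r}. a j n)) sums (suminf ?b - (\<Sum>j\<in>{1..r}. - ln (1 - t ^ j)))"
    using a_sums summable_sigma_series[OF assms] by (intro sums_diff summable_sums sums_sum) auto
  have "0 < (\<Sum>n. ?b n - (\<Sum>j\<in>{1..r}. a j n))"
    by (rule suminf_pos) (use diff_sums a_less_b in \<open>auto simp: sums_iff\<close>)
  then show ?thesis
    using diff_sums by (simp add: sums_iff t_def)
qed

lemma prod_inverse_one_minus_power_less_powr_sigma:
  assumes "2 \<le> q"
  shows "(\<Prod>j\<in>{1..r}. 1 / (1 - (1 / real q) ^ j)) < real q powr sigma q"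
proof -
  have factor_pos: "0 < 1 - (1 / real q) ^ j" if "1 \<le> j" for j
    using assms that by (simp add: power_less_one_iff)
  define P where "P = (\<Prod>j\<in>{1..r}. 1 / (1 - (1 / real q) ^ j))"
  have "0 < P"
    using factor_pos by (auto simp: P_def intro: prod_pos)
  have "ln P = (\<Sum>j\<in>{1..r}. ln (1 / (1 - (1 / real q) ^ j)))"
    unfolding P_def by (rule ln_prod) (use factor_pos in fastforce)+
  also have "\<dots> = (\<Sum>j\<in>{1..r}. - ln (1 - (1 / real q) ^ j))"
    by (rule sum.cong) (use factor_pos in \<open>auto simp: ln_div\<close>)
  also have "\<dots> < (\<Sum>n. 1 / (real (Suc n) * (real q ^ Suc n - 1)))"
    by (rule sum_minus_ln_less_sigma_series[OF assms])
  also have "\<dots> = sigma q * ln (real q)"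
    using assms by (simp add: sigma_def)
  finally have "P < exp (sigma q * ln (real q))"
    using \<open>0 < P\<close> by (metis exp_less_mono exp_ln)
  then show ?thesis
    using assms by (simp add: P_def powr_def)
qed

lemma q_binomial_factor_le:
  fixes Q :: real
  assumes "1 < Q" "i < p" "p \<le> m"
  shows "(Q ^ m - Q ^ i) / (Q ^ p - Q ^ i) \<le> Q ^ (m - p) * (1 / (1 - (1 / Q) ^ (p - i)))"
proof -
  have lt: "Q ^ i < Q ^ p"
    using assms by (intro power_strict_increasing) auto
  have "1 - (1 / Q) ^ (p - i) = (Q ^ p - Q ^ i) / Q ^ p"
    using assms by (simp add: field_simps power_one_over flip: power_add)
  then have "Q ^ (m - p) * (1 / (1 - (1 / Q) ^ (p - i))) = Q ^ m / (Q ^ p - Q ^ i)"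
    using assms by (simp flip: power_add)
  moreover have "(Q ^ m - Q ^ i) / (Q ^ p - Q ^ i) \<le> Q ^ m / (Q ^ p - Q ^ i)"
    using lt assms by (intro divide_right_mono) auto
  ultimately show ?thesis by simp
qed

lemma q_binomial_le:
  fixes Q :: real
  assumes "1 < Q" "p \<le> m"
  shows "(\<Prod>i<p. (Q ^ m - Q ^ i) / (Q ^ p - Q ^ i))
           \<le> Q ^ (p * (m - p)) * (\<Prod>j\<in>{1..p}. 1 / (1 - (1 / Q) ^ j))"
proof -
  have "(\<Prod>i<p. (Q ^ m - Q ^ i) / (Q ^ p - Q ^ i)) \<le> (\<Prod>i<p. Q ^ (m - p) * (1 / (1 - (1 / Q) ^ (p - i))))"
  proof (rule prod_mono)
    fix i assume "i \<in> {..<p}"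
    moreover have "Q ^ i < Q ^ p" "Q ^ i \<le> Q ^ m"
      using assms \<open>i \<in> {..<p}\<close> by (auto intro: power_strict_increasing power_increasing)
    ultimately show "0 \<le> (Q ^ m - Q ^ i) / (Q ^ p - Q ^ i) \<and>
        (Q ^ m - Q ^ i) / (Q ^ p - Q ^ i) \<le> Q ^ (m - p) * (1 / (1 - (1 / Q) ^ (p - i)))"
      using assms q_binomial_factor_le[of Q i p m] by auto
  qed
  also have "\<dots> = Q ^ (p * (m - p)) * (\<Prod>i<p. 1 / (1 - (1 / Q) ^ (p - i)))"
    unfolding prod.distrib by (simp add: power_mult[symmetric] mult.commute)
  also have "(\<Prod>i<p. 1 / (1 - (1 / Q) ^ (p - i))) = (\<Prod>j\<in>{1..p}. 1 / (1 - (1 / Q) ^ j))"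
    by (rule prod.reindex_bij_witness[of _ "\<lambda>j. p - j" "\<lambda>i. p - i"]) auto
  finally show ?thesis .
qed

section \<open>Linear algebra over a subfield\<close>

lemma is_subfieldD:
  assumes "is_subfield K"
  shows "0 \<in> K" "1 \<in> K" "x \<in> K \<Longrightarrow> y \<in> K \<Longrightarrow> x + y \<in> K" "x \<in> K \<Longrightarrow> y \<in> K \<Longrightarrow> x * y \<in> K"
    "x \<in> K \<Longrightarrow> - x \<in> K" "x \<in> K \<Longrightarrow> inverse x \<in> K"
    "x \<in> K \<Longrightarrow> y \<in> K \<Longrightarrow> x - y \<in> K" "x \<in> K \<Longrightarrow> y \<in> K \<Longrightarrow> x / y \<in> K"
  using assms unfolding is_subfield_def diff_conv_add_uminus divide_inverse by blast+

lemma card_subfield_ge_2: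
  fixes K :: "'a::{field,finite} set"
  assumes "is_subfield K"
  shows "2 \<le> card K"
proof -
  have "card {0::'a, 1} \<le> card K"
    using is_subfieldD(1,2)[OF assms] by (intro card_mono) auto
  then show ?thesis by simp
qed

text \<open>An \<open>r\<close>-tuple of elements of \<open>'a\<close> is a function \<open>nat \<Rightarrow> 'a\<close> of which only the entries below \<open>r\<close>
  matter.\<close>
definition span_over :: "'a::field set \<Rightarrow> (nat \<Rightarrow> 'a) \<Rightarrow> nat \<Rightarrow> 'a set" where
  "span_over K b r = (\<lambda>c. \<Sum>i<r. c i * b i) ` {c. \<forall>i<r. c i \<in> K}"

definition subspace_over :: "'a::field set \<Rightarrow> 'a set \<Rightarrow> bool" where
  "subspace_over K U \<longleftrightarrow> 0 \<in> U \<and> (\<forall>x\<in>U. \<forall>y\<in>U. x + y \<in> U) \<and> (\<forall>a\<in>K. \<forall>x\<in>U. a * x \<in> U)"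

lemma subspace_over_UNIV: "subspace_over K UNIV"
  by (simp add: subspace_over_def)

lemma subspace_over_sum:
  assumes "subspace_over K U" "\<And>i. i \<in> A \<Longrightarrow> f i \<in> U"
  shows "sum f A \<in> U"
  using assms(2) by (induction A rule: infinite_finite_induct) (use assms(1) in \<open>auto simp: subspace_over_def\<close>)

lemma span_over_subset:
  assumes "subspace_over K U" "\<And>i. i < r \<Longrightarrow> b i \<in> U"
  shows "span_over K b r \<subseteq> U"
  unfolding span_over_def using assms
  by (auto intro!: subspace_over_sum simp: subspace_over_def)

lemma subspace_over_span_over:
  assumes "is_subfield K"
  shows "subspace_over K (span_over K b r)"
  unfolding subspace_over_def
proof (intro conjI ballI)
  show "0 \<in> span_over K b r" unfolding span_over_def
    by (rule image_eqI[of _ _ "\<lambda>_. 0"]) (auto simp: is_subfieldD[OF assms])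
next
  fix x y assume "x \<in> span_over K b r" "y \<in> span_over K b r"
  then obtain c d where "\<forall>i<r. c i \<in> K" "\<forall>i<r. d i \<in> K" "x = (\<Sum>i<r. c i * b i)" "y = (\<Sum>i<r. d i * b i)"
    unfolding span_over_def by auto
  then show "x + y \<in> span_over K b r" unfolding span_over_def
    by (intro image_eqI[of _ _ "\<lambda>i. c i + d i"]) (auto simp: is_subfieldD[OF assms] sum.distrib distrib_right)
next
  fix a x assume "a \<in> K" "x \<in> span_over K b r"
  then obtain c where "\<forall>i<r. c i \<in> K" "x = (\<Sum>i<r. c i * b i)"
    unfolding span_over_def by auto
  then show "a * x \<in> span_over K b r" unfolding span_over_def using \<open>a \<in> K\<close>
    by (intro image_eqI[of _ _ "\<lambda>i. a * c i"]) (auto simp: is_subfieldD[OF assms] sum_distrib_left mult.assoc)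
qed

lemma mem_span_over:
  assumes "is_subfield K" "i < r"
  shows "b i \<in> span_over K b r"
  unfolding span_over_def
proof (rule image_eqI[of _ _ "\<lambda>j. if j = i then 1 else 0"])
  have "(\<Sum>j<r. (if j = i then 1 else 0) * b j) = (\<Sum>j<r. if j = i then b j else 0)"
    by (rule sum.cong) auto
  then show "b i = (\<Sum>j<r. (if j = i then 1 else 0) * b j)"
    using assms(2) by simp
qed (auto simp: is_subfieldD[OF assms(1)])

lemma span_over_cong:
  assumes "\<And>i. i < r \<Longrightarrow> b i = b' i"
  shows "span_over K b r = span_over K b' r"
  unfolding span_over_def using assms by (auto intro!: image_cong sum.cong)

lemma lin_indep_overD:
  assumes "lin_indep_over K f S" "\<forall>i\<in>S. c i \<in> K" "(\<Sum>i\<in>S. c i * f i) = 0" "i \<in> S"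
  shows "c i = 0"
  using assms unfolding lin_indep_over_def by blast

lemma lin_indep_over_cong:
  assumes "\<And>i. i \<in> S \<Longrightarrow> b i = b' i"
  shows "lin_indep_over K b S \<longleftrightarrow> lin_indep_over K b' S"
  unfolding lin_indep_over_def using assms by (simp cong: sum.cong)

lemma lin_indep_over_subset:
  assumes "is_subfield K" "lin_indep_over K f S" "T \<subseteq> S" "finite S"
  shows "lin_indep_over K f T"
  unfolding lin_indep_over_def
proof (intro allI impI ballI)
  fix c i assume c: "(\<forall>i\<in>T. c i \<in> K) \<and> (\<Sum>i\<in>T. c i * f i) = 0" and "i \<in> T"
  define c' where "c' j = (if j \<in> T then c j else 0)" for j
  have "(\<Sum>j\<in>S. c' j * f j) = (\<Sum>j\<in>S. if j \<in> T then c j * f j else 0)"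
    by (rule sum.cong) (auto simp: c'_def)
  also have "\<dots> = (\<Sum>j\<in>T. c j * f j)"
    using assms(3,4) by (simp add: sum.If_cases Int_absorb1)
  finally have "(\<Sum>j\<in>S. c' j * f j) = (\<Sum>j\<in>T. c j * f j)" .
  moreover have "\<forall>j\<in>S. c' j \<in> K"
    using c is_subfieldD(1)[OF assms(1)] by (auto simp: c'_def)
  ultimately have "c' i = 0"
    using lin_indep_overD[OF assms(2)] c \<open>i \<in> T\<close> assms(3) by auto
  then show "c i = 0"
    using \<open>i \<in> T\<close> by (simp add: c'_def)
qed

lemma card_span_over:
  fixes b :: "nat \<Rightarrow> 'a::{field,finite}"
  assumes "is_subfield K" "lin_indep_over K b {..<r}"
  shows "card (span_over K b r) = card K ^ r"
proof -
  have span_eq: "span_over K b r = (\<lambda>c. \<Sum>i<r. c i * b i) ` ({..<r} \<rightarrow>\<^sub>E K)"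
    unfolding span_over_def
  proof (intro equalityI subsetI)
    fix y assume "y \<in> (\<lambda>c. \<Sum>i<r. c i * b i) ` {c. \<forall>i<r. c i \<in> K}"
    then obtain c where c: "\<forall>i<r. c i \<in> K" "y = (\<Sum>i<r. c i * b i)" by auto
    show "y \<in> (\<lambda>c. \<Sum>i<r. c i * b i) ` ({..<r} \<rightarrow>\<^sub>E K)"
      by (rule image_eqI[of _ _ "restrict c {..<r}"]) (use c in auto)
  qed (auto simp: PiE_def Pi_def)
  have "inj_on (\<lambda>c. \<Sum>i<r. c i * b i) ({..<r} \<rightarrow>\<^sub>E K)"
  proof (rule inj_onI)
    fix c d assume c: "c \<in> {..<r} \<rightarrow>\<^sub>E K" and d: "d \<in> {..<r} \<rightarrow>\<^sub>E K"
      and "(\<Sum>i<r. c i * b i) = (\<Sum>i<r. d i * b i)"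
    then have "(\<Sum>i<r. (c i - d i) * b i) = 0"
      by (simp add: left_diff_distrib sum_subtractf)
    moreover have "\<forall>i\<in>{..<r}. c i - d i \<in> K"
      using c d is_subfieldD(7)[OF assms(1)] by auto
    ultimately have "c i - d i = 0" if "i < r" for i
      using lin_indep_overD[OF assms(2), of "\<lambda>i. c i - d i" i] that by simp
    then show "c = d" using c d by (intro PiE_ext) auto
  qed
  then show ?thesis
    unfolding span_eq by (simp add: card_image card_PiE)
qed

lemma lin_indep_over_fun_upd_imp_notin_span_over:
  assumes K: "is_subfield K" and ind: "lin_indep_over K (b(r := v)) {..<Suc r}"
  shows "v \<notin> span_over K b r"
proof
  assume "v \<in> span_over K b r"
  then obtain c where c: "\<forall>i<r. c i \<in> K" "v = (\<Sum>i<r. c i * b i)"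
    unfolding span_over_def by auto
  define d where "d i = (if i = r then -1 else c i)" for i
  have "(\<Sum>i<r. d i * (b(r := v)) i) = (\<Sum>i<r. c i * b i)"
    by (rule sum.cong) (auto simp: d_def)
  then have "(\<Sum>i<Suc r. d i * (b(r := v)) i) = (\<Sum>i<r. c i * b i) - v"
    by (simp add: d_def)
  moreover have "\<forall>i\<in>{..<Suc r}. d i \<in> K"
    using c is_subfieldD[OF K] by (auto simp: d_def)
  ultimately have "d r = 0"
    using lin_indep_overD[OF ind, of d r] c(2) by simp
  then show False by (simp add: d_def)
qed

lemma lin_indep_over_fun_upd:
  assumes K: "is_subfield K" and ind: "lin_indep_over K b {..<r}" and v: "v \<notin> span_over K b r"
  shows "lin_indep_over K (b(r := v)) {..<Suc r}"
  unfolding lin_indep_over_def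
proof (intro allI impI)
  fix c assume c: "(\<forall>i\<in>{..<Suc r}. c i \<in> K) \<and> (\<Sum>i\<in>{..<Suc r}. c i * (b(r := v)) i) = 0"
  have "(\<Sum>i<r. c i * (b(r := v)) i) = (\<Sum>i<r. c i * b i)"
    by (rule sum.cong) auto
  with c have sum0: "(\<Sum>i<r. c i * b i) + c r * v = 0"
    by simp
  have "c r = 0"
  proof (rule ccontr)
    assume "c r \<noteq> 0"
    then have "v = - (\<Sum>i<r. c i * b i) / c r"
      using sum0 by (simp add: field_simps add_eq_0_iff)
    also have "\<dots> = (\<Sum>i<r. (- c i / c r) * b i)"
      by (simp add: sum_divide_distrib sum_negf)
    finally have "v = (\<Sum>i<r. (- c i / c r) * b i)" .
    moreover have "\<forall>i<r. - c i / c r \<in> K"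
      using c is_subfieldD[OF K] by auto
    ultimately have "v \<in> span_over K b r"
      unfolding span_over_def by (intro image_eqI[of _ _ "\<lambda>i. - c i / c r"]) auto
    with v show False ..
  qed
  then have "c i = 0" if "i < r" for i
    using lin_indep_overD[OF ind, of c i] c sum0 that by simp
  with \<open>c r = 0\<close> show "\<forall>i\<in>{..<Suc r}. c i = 0"
    using less_Suc_eq by auto
qed

definition indep_tuples :: "'a::field set \<Rightarrow> 'a set \<Rightarrow> nat \<Rightarrow> (nat \<Rightarrow> 'a) set" where
  "indep_tuples K U r = {b \<in> {..<r} \<rightarrow>\<^sub>E U. lin_indep_over K b {..<r}}"

lemma finite_indep_tuples: "finite (indep_tuples K (U :: 'a::{field,finite} set) r)"
  unfolding indep_tuples_def by (rule finite_subset[of _ "{..<r} \<rightarrow>\<^sub>E U"]) (auto intro: finite_PiE)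

lemma indep_tuples_SucD:
  assumes K: "is_subfield K" and b': "b' \<in> indep_tuples K U (Suc r)"
  shows "b'(r := undefined) \<in> indep_tuples K U r" "b' r \<in> U - span_over K (b'(r := undefined)) r"
proof -
  define b where "b = b'(r := undefined)"
  have b'_PiE: "b' \<in> {..<Suc r} \<rightarrow>\<^sub>E U" and ind': "lin_indep_over K b' {..<Suc r}"
    using b' by (simp_all add: indep_tuples_def)
  have "b \<in> {..<r} \<rightarrow>\<^sub>E U"
  proof (rule PiE_I)
    show "b x \<in> U" if "x \<in> {..<r}" for x
      using PiE_mem[OF b'_PiE, of x] that by (simp add: b_def)
    show "b x = undefined" if "x \<notin> {..<r}" for x
      using PiE_arb[OF b'_PiE, of x] that by (auto simp: b_def)
  qed
  moreover have "lin_indep_over K b' {..<r}"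
    using ind' by (rule lin_indep_over_subset[OF K]) auto
  then have "lin_indep_over K b {..<r}"
    by (subst lin_indep_over_cong[of _ b b']) (auto simp: b_def)
  ultimately show "b'(r := undefined) \<in> indep_tuples K U r"
    by (simp add: b_def indep_tuples_def)
  have "b(r := b' r) = b'"
    by (simp add: b_def)
  then show "b' r \<in> U - span_over K (b'(r := undefined)) r"
    using lin_indep_over_fun_upd_imp_notin_span_over[OF K] ind' b'_PiE by (auto simp: b_def)
qed

lemma bij_betw_indep_tuples_Suc:
  assumes K: "is_subfield K"
  shows "bij_betw (\<lambda>(b, v). b(r := v))
           (SIGMA b:indep_tuples K U r. U - span_over K b r) (indep_tuples K U (Suc r))"
proof (rule bij_betwI[where g = "\<lambda>b. (b(r := undefined), b r)"])
  show "(\<lambda>(b, v). b(r := v)) \<in> (SIGMA b:indep_tuples K U r. U - span_over K b r) \<rightarrow> indep_tuples K U (Suc r)"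
    using lin_indep_over_fun_upd[OF K]
    by (auto simp: indep_tuples_def lessThan_Suc intro!: PiE_fun_upd)
  show "(\<lambda>b. (b(r := undefined), b r)) \<in> indep_tuples K U (Suc r) \<rightarrow> (SIGMA b:indep_tuples K U r. U - span_over K b r)"
    using indep_tuples_SucD[OF K] by blast
  show "(\<lambda>b. (b(r := undefined), b r)) ((\<lambda>(b, v). b(r := v)) bv) = bv"
    if "bv \<in> (SIGMA b:indep_tuples K U r. U - span_over K b r)" for bv
  proof -
    obtain b v where bv: "bv = (b, v)"
      by (cases bv)
    moreover have "b \<in> {..<r} \<rightarrow>\<^sub>E U"
      using that bv by (simp add: indep_tuples_def)
    then have "b r = undefined"
      by (rule PiE_arb) simp
    ultimately show ?thesis
      by (simp add: fun_upd_idem)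
  qed
qed simp

lemma card_indep_tuples:
  fixes U :: "'a::{field,finite} set"
  assumes K: "is_subfield K" and U: "subspace_over K U"
  shows "card (indep_tuples K U r) = (\<Prod>i<r. card U - card K ^ i)"
proof (induction r)
  case 0
  have "indep_tuples K U 0 = {\<lambda>_. undefined}"
    by (simp add: indep_tuples_def lin_indep_over_def)
  then show ?case by simp
next
  case (Suc r)
  have "card (indep_tuples K U (Suc r)) = card (SIGMA b:indep_tuples K U r. U - span_over K b r)"
    using bij_betw_same_card[OF bij_betw_indep_tuples_Suc[OF K]] by simp
  also have "\<dots> = (\<Sum>b\<in>indep_tuples K U r. card (U - span_over K b r))"
    by (simp add: card_SigmaI finite_indep_tuples)
  also have "\<dots> = (\<Sum>b\<in>indep_tuples K U r. card U - card K ^ r)"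
  proof (rule sum.cong)
    fix b assume b: "b \<in> indep_tuples K U r"
    then have "span_over K b r \<subseteq> U"
      by (intro span_over_subset[OF U]) (auto simp: indep_tuples_def PiE_iff)
    with b show "card (U - span_over K b r) = card U - card K ^ r"
      by (simp add: card_Diff_subset card_span_over[OF K] indep_tuples_def)
  qed simp
  finally show ?case
    using Suc.IH by simp
qed

lemma rk_maximal_indep:
  fixes x :: "'a::field ^ 'n"
  obtains S where "lin_indep_over K (($) x) S" "card S = rk K x"
    "\<And>j. j \<notin> S \<Longrightarrow> \<not> lin_indep_over K (($) x) (insert j S)"
proof -
  define M where "M = card ` {S. lin_indep_over K (($) x) S}"
  have "finite M" by (simp add: M_def)
  have "lin_indep_over K (($) x) {}"
    by (simp add: lin_indep_over_def)
  then have "M \<noteq> {}"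
    unfolding M_def by blast
  then obtain S where S: "lin_indep_over K (($) x) S" "card S = Max M"
    using Max_in[OF \<open>finite M\<close>] by (metis M_def imageE mem_Collect_eq)
  have "\<not> lin_indep_over K (($) x) (insert j S)" if "j \<notin> S" for j
  proof
    assume "lin_indep_over K (($) x) (insert j S)"
    then have "card (insert j S) \<in> M"
      unfolding M_def by blast
    then have "card (insert j S) \<le> Max M"
      using \<open>finite M\<close> by simp
    with S(2) that show False by simp
  qed
  with S that show ?thesis
    by (simp add: rk_def M_def)
qed

lemma rk_le_card_nonzero:
  fixes x :: "'a::field ^ 'n"
  assumes K: "is_subfield K"
  shows "rk K x \<le> card {i. x $ i \<noteq> 0}"
proof -
  obtain S where S: "lin_indep_over K (($) x) S" "card S = rk K x"
    using rk_maximal_indep by blast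
  have "S \<subseteq> {i. x $ i \<noteq> 0}"
  proof
    fix i assume "i \<in> S"
    define c where "c j = (if j = i then 1 else (0 :: 'a))" for j
    have "(\<Sum>j\<in>S. c j * x $ j) = (\<Sum>j\<in>S. if j = i then x $ j else 0)"
      by (rule sum.cong) (auto simp: c_def)
    also have "\<dots> = x $ i"
      using \<open>i \<in> S\<close> by simp
    finally have "(\<Sum>j\<in>S. c j * x $ j) = x $ i" .
    moreover have "\<forall>j\<in>S. c j \<in> K"
      using is_subfieldD(1,2)[OF K] by (simp add: c_def)
    moreover have "c i \<noteq> 0"
      by (simp add: c_def)
    ultimately show "i \<in> {i. x $ i \<noteq> 0}"
      using lin_indep_overD[OF S(1), of c i] \<open>i \<in> S\<close> by auto
  qed
  then show ?thesis
    using S(2) by (metis card_mono finite)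
qed

lemma in_span_if_not_lin_indep_over_insert:
  assumes K: "is_subfield K" and ind: "lin_indep_over K f S" and "finite S" "j \<notin> S"
    and dep: "\<not> lin_indep_over K f (insert j S)"
  obtains d where "\<forall>s\<in>S. d s \<in> K" "f j = (\<Sum>s\<in>S. d s * f s)"
proof -
  obtain c where c: "\<forall>i\<in>insert j S. c i \<in> K" "(\<Sum>i\<in>insert j S. c i * f i) = 0"
    and nz: "\<exists>i\<in>insert j S. c i \<noteq> 0"
    using dep unfolding lin_indep_over_def by blast
  have sum0: "c j * f j + (\<Sum>i\<in>S. c i * f i) = 0"
    using c assms(3,4) by simp
  have "c j \<noteq> 0"
  proof
    assume "c j = 0"
    then have "c i = 0" if "i \<in> S" for i
      using lin_indep_overD[OF ind, of c i] c sum0 that by simp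
    with nz \<open>c j = 0\<close> show False by auto
  qed
  then have "f j = - (\<Sum>i\<in>S. c i * f i) / c j"
    using sum0 by (simp add: field_simps add_eq_0_iff)
  also have "\<dots> = (\<Sum>s\<in>S. (- c s / c j) * f s)"
    by (simp add: sum_divide_distrib sum_negf)
  finally have "f j = (\<Sum>s\<in>S. (- c s / c j) * f s)" .
  then show ?thesis
    by (rule that[rotated]) (use c is_subfieldD[OF K] in auto)
qed

lemma lin_indep_over_reindex:
  assumes h: "bij_betw h {..<r} S" and ind: "lin_indep_over K f S"
  shows "lin_indep_over K (f \<circ> h) {..<r}"
  unfolding lin_indep_over_def
proof (intro allI impI ballI)
  fix c i assume c: "(\<forall>i\<in>{..<r}. c i \<in> K) \<and> (\<Sum>i\<in>{..<r}. c i * (f \<circ> h) i) = 0"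
    and i: "i \<in> {..<r}"
  define c' where "c' = c \<circ> inv_into {..<r} h"
  have inv: "inv_into {..<r} h (h j) = j" if "j < r" for j
    using h that by (simp add: bij_betw_def inv_into_f_f)
  have c'_K: "\<forall>s\<in>S. c' s \<in> K"
    using c h by (auto simp: c'_def bij_betw_def inv_into_into)
  have "(\<Sum>s\<in>S. c' s * f s) = (\<Sum>j<r. c' (h j) * f (h j))"
    by (rule sum.reindex_bij_betw[OF h, symmetric])
  also have "\<dots> = (\<Sum>j<r. c j * (f \<circ> h) j)"
    by (rule sum.cong) (simp_all add: c'_def inv)
  also have "\<dots> = 0"
    using c by simp
  finally have "c' (h i) = 0"
    using lin_indep_overD[OF ind c'_K] h i by (auto simp: bij_betw_def)
  then show "c i = 0"
    using inv i by (simp add: c'_def)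
qed

lemma sum_mem_span_over_reindex:
  assumes h: "bij_betw h {..<r} S" and d: "\<forall>s\<in>S. d s \<in> K"
  shows "(\<Sum>s\<in>S. d s * f s) \<in> span_over K (f \<circ> h) r"
proof -
  have "(\<Sum>s\<in>S. d s * f s) = (\<Sum>j<r. d (h j) * f (h j))"
    by (rule sum.reindex_bij_betw[OF h, symmetric])
  moreover have "\<forall>j<r. d (h j) \<in> K"
    using d h by (auto simp: bij_betw_def)
  ultimately show ?thesis
    unfolding span_over_def by (intro image_eqI[of _ _ "d \<circ> h"]) auto
qed

text \<open>Here \<open>'a\<close> has dimension \<open>m\<close> over \<open>K\<close>, so independent tuples extend up to length \<open>m\<close>.\<close>
lemma lin_indep_over_extend:
  fixes b :: "nat \<Rightarrow> 'a::{field,finite}"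
  assumes K: "is_subfield K" and card: "CARD('a) = card K ^ m"
    and ind: "lin_indep_over K b {..<r}" and "r \<le> p" "p \<le> m"
  obtains b' where "lin_indep_over K b' {..<p}" "span_over K b r \<subseteq> span_over K b' p"
proof -
  have "\<exists>b'. lin_indep_over K b' {..<p} \<and> span_over K b r \<subseteq> span_over K b' p"
    using \<open>r \<le> p\<close> \<open>p \<le> m\<close>
  proof (induction p)
    case 0
    then show ?case using ind by auto
  next
    case (Suc p)
    show ?case
    proof (cases "r = Suc p")
      case True
      then show ?thesis using ind by auto
    next
      case False
      with Suc obtain b' where b': "lin_indep_over K b' {..<p}" "span_over K b r \<subseteq> span_over K b' p"
        by auto
      have "card (span_over K b' p) < card (UNIV :: 'a set)"
        using card_span_over[OF K b'(1)] card card_subfield_ge_2[OF K] Suc.prems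
        by (simp add: power_strict_increasing)
      then have "span_over K b' p \<noteq> UNIV"
        by auto
      then obtain v where v: "v \<notin> span_over K b' p"
        by blast
      have "span_over K b' p = span_over K (b'(p := v)) p"
        by (rule span_over_cong) auto
      also have "\<dots> \<subseteq> span_over K (b'(p := v)) (Suc p)"
        by (intro span_over_subset[OF subspace_over_span_over[OF K]] mem_span_over[OF K]) auto
      finally show ?thesis
        using lin_indep_over_fun_upd[OF K b'(1) v] b'(2) by blast
    qed
  qed
  with that show ?thesis by blast
qed

lemma rk_le_imp_coordinates_in_span_over:
  fixes x :: "'a::{field,finite} ^ 'n"
  assumes K: "is_subfield K" and card: "CARD('a) = card K ^ m" and "rk K x \<le> p" "p \<le> m"
  obtains b where "lin_indep_over K b {..<p}" "\<And>j. x $ j \<in> span_over K b p"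
proof -
  obtain S where S: "lin_indep_over K (($) x) S" "card S = rk K x"
    "\<And>j. j \<notin> S \<Longrightarrow> \<not> lin_indep_over K (($) x) (insert j S)"
    using rk_maximal_indep by blast
  obtain h where h: "bij_betw h {..<card S} S"
    using ex_bij_betw_nat_finite[of S] by (auto simp: atLeast0LessThan)
  define b0 where "b0 = ($) x \<circ> h"
  have "x $ j \<in> span_over K b0 (card S)" for j
  proof (cases "j \<in> S")
    case True
    then obtain i where "i < card S" "j = h i"
      using h by (auto simp: bij_betw_def)
    then show ?thesis
      using mem_span_over[OF K, of i "card S" b0] by (simp add: b0_def)
  next
    case False
    obtain d where "\<forall>s\<in>S. d s \<in> K" "x $ j = (\<Sum>s\<in>S. d s * x $ s)"
      by (rule in_span_if_not_lin_indep_over_insert[OF K S(1) finite False S(3)[OF False]])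
    then show ?thesis
      using sum_mem_span_over_reindex[OF h] by (simp add: b0_def)
  qed
  moreover have "card S \<le> p"
    using S(2) assms(3) by simp
  then obtain b where "lin_indep_over K b {..<p}" "span_over K b0 (card S) \<subseteq> span_over K b p"
    unfolding b0_def by (rule lin_indep_over_extend[OF K card lin_indep_over_reindex[OF h S(1)] _ \<open>p \<le> m\<close>])
  ultimately show ?thesis
    using that by blast
qed

lemma card_vec_coordinates_in: "card {x :: 'a ^ 'n. \<forall>j. x $ j \<in> T} = card T ^ CARD('n)"
proof -
  have "bij_betw vec_lambda (UNIV \<rightarrow>\<^sub>E T) {x :: 'a ^ 'n. \<forall>j. x $ j \<in> T}"
    by (rule bij_betwI[where g = vec_nth]) (auto simp: vec_lambda_inverse)
  then show ?thesis
    by (simp add: bij_betw_same_card[symmetric] card_PiE)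
qed

lemma card_spanning_indep_tuples_ge:
  fixes x :: "'a::{field,finite} ^ 'n"
  assumes K: "is_subfield K" and card: "CARD('a) = card K ^ m" and "rk K x \<le> p" "p \<le> m"
  shows "(\<Prod>i<p. card K ^ p - card K ^ i)
           \<le> card {b \<in> indep_tuples K UNIV p. \<forall>j. x $ j \<in> span_over K b p}"
proof -
  obtain a where a: "lin_indep_over K a {..<p}" "\<And>j. x $ j \<in> span_over K a p"
    using rk_le_imp_coordinates_in_span_over[OF K card assms(3,4)] by blast
  define U where "U = span_over K a p"
  have U: "subspace_over K U" "card U = card K ^ p"
    unfolding U_def using subspace_over_span_over[OF K] card_span_over[OF K a(1)] by auto
  have "indep_tuples K U p \<subseteq> {b \<in> indep_tuples K UNIV p. \<forall>j. x $ j \<in> span_over K b p}"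
  proof
    fix b assume b: "b \<in> indep_tuples K U p"
    then have "span_over K b p \<subseteq> U"
      by (intro span_over_subset[OF U(1)]) (auto simp: indep_tuples_def)
    moreover have "card (span_over K b p) = card U"
      using b U(2) card_span_over[OF K] by (simp add: indep_tuples_def)
    ultimately have "span_over K b p = U"
      by (intro card_subset_eq) auto
    with b a(2) show "b \<in> {b \<in> indep_tuples K UNIV p. \<forall>j. x $ j \<in> span_over K b p}"
      by (auto simp: U_def indep_tuples_def)
  qed
  then have "card (indep_tuples K U p) \<le> card {b \<in> indep_tuples K UNIV p. \<forall>j. x $ j \<in> span_over K b p}"
    by (intro card_mono finite_subset[OF _ finite_indep_tuples]) auto
  then show ?thesis
    using card_indep_tuples[OF K U(1)] U(2) by simp
qed

text \<open>Double counting of the pairs \<open>(x, b)\<close> with \<open>b\<close> an independent \<open>p\<close>-tuple whose span contains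
  every coordinate of \<open>x\<close>.\<close>
lemma card_rk_le_mult_le:
  fixes K :: "'a::{field,finite} set"
  assumes K: "is_subfield K" and card: "CARD('a) = card K ^ m" and "p \<le> m"
  shows "card {x :: 'a ^ 'n. rk K x \<le> p} * (\<Prod>i<p. card K ^ p - card K ^ i)
           \<le> (\<Prod>i<p. CARD('a) - card K ^ i) * (card K ^ p) ^ CARD('n)"
proof -
  define I where "I = indep_tuples K (UNIV :: 'a set) p"
  define spans where "spans x b \<longleftrightarrow> (\<forall>j. x $ j \<in> span_over K b p)" for x :: "'a ^ 'n" and b
  have "card {x :: 'a ^ 'n. rk K x \<le> p} * (\<Prod>i<p. card K ^ p - card K ^ i)
        = (\<Sum>x \<in> {x :: 'a ^ 'n. rk K x \<le> p}. \<Prod>i<p. card K ^ p - card K ^ i)"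
    by simp
  also have "\<dots> \<le> (\<Sum>x \<in> {x. rk K x \<le> p}. card {b \<in> I. spans x b})"
    using card_spanning_indep_tuples_ge[OF K card _ \<open>p \<le> m\<close>]
    by (intro sum_mono) (simp add: I_def spans_def)
  also have "\<dots> \<le> (\<Sum>x\<in>UNIV. card {b \<in> I. spans x b})"
    by (intro sum_mono2) auto
  also have "\<dots> = (card K ^ p) ^ CARD('n) * card I"
  proof (rule sum_multicount)
    show "\<forall>b\<in>I. card {x \<in> UNIV. spans x b} = (card K ^ p) ^ CARD('n)"
    proof
      fix b assume "b \<in> I"
      then have "card (span_over K b p) = card K ^ p"
        by (simp add: I_def indep_tuples_def card_span_over[OF K])
      then show "card {x \<in> UNIV. spans x b} = (card K ^ p) ^ CARD('n)"
        by (simp add: spans_def card_vec_coordinates_in)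
    qed
  qed (auto simp: I_def finite_indep_tuples)
  also have "card I = (\<Prod>i<p. CARD('a) - card K ^ i)"
    unfolding I_def by (simp add: card_indep_tuples[OF K subspace_over_UNIV])
  finally show ?thesis
    by (simp add: mult.commute)
qed

section \<open>Rank-metric codes\<close>

lemma card_vec_subspace:
  fixes C :: "('a::{field,finite} ^ 'n) set"
  assumes "vec.subspace C"
  shows "card C = CARD('a) ^ vec.dim C"
proof -
  obtain B where B: "B \<subseteq> C" "vec.independent B" "C \<subseteq> vec.span B" "card B = vec.dim C"
    using vec.basis_exists by blast
  have "C = vec.span B"
    using vec.span_subspace[OF B(1,3) assms] by simp
  also have "\<dots> = range (\<lambda>u. \<Sum>v\<in>B. u v *s v)"
    by (simp add: vec.span_finite)
  also have "\<dots> = (\<lambda>u. \<Sum>v\<in>B. u v *s v) ` (B \<rightarrow>\<^sub>E UNIV)"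
  proof (intro equalityI subsetI)
    fix y assume "y \<in> range (\<lambda>u. \<Sum>v\<in>B. u v *s v)"
    then obtain u where "y = (\<Sum>v\<in>B. u v *s v)" by auto
    then show "y \<in> (\<lambda>u. \<Sum>v\<in>B. u v *s v) ` (B \<rightarrow>\<^sub>E UNIV)"
      by (intro image_eqI[of _ _ "restrict u B"]) auto
  qed auto
  finally have C_eq: "C = (\<lambda>u. \<Sum>v\<in>B. u v *s v) ` (B \<rightarrow>\<^sub>E UNIV)" .
  have "inj_on (\<lambda>u. \<Sum>v\<in>B. u v *s v) (B \<rightarrow>\<^sub>E UNIV)"
  proof (rule inj_onI)
    fix u w assume u: "u \<in> B \<rightarrow>\<^sub>E UNIV" and w: "w \<in> B \<rightarrow>\<^sub>E UNIV"
      and "(\<Sum>v\<in>B. u v *s v) = (\<Sum>v\<in>B. w v *s v)"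
    then have "(\<Sum>v\<in>B. (u v - w v) *s v) = 0"
      by (simp add: vec.scale_left_diff_distrib sum_subtractf)
    then have "\<forall>v\<in>B. u v - w v = 0"
      using B(2) vec.independent_explicit[of B] by (auto dest!: spec[of _ "\<lambda>v. u v - w v"])
    then show "u = w"
      using u w by (intro PiE_ext) auto
  qed
  then have "card C = card (B \<rightarrow>\<^sub>E (UNIV :: 'a set))"
    by (subst C_eq) (rule card_image)
  then show ?thesis
    using B(4) by (simp add: card_PiE)
qed

text \<open>Extend a basis of \<open>C\<close> by standard basis vectors; the part of \<open>x\<close> outside \<open>C\<close> then lies in the
  span of \<open>n - dim C\<close> of them.\<close>
lemma subspace_hamming_cover:
  fixes C :: "('a::{field,finite} ^ 'n) set"
  assumes "vec.subspace C"
  obtains c where "c \<in> C" "card {i. (x - c) $ i \<noteq> 0} \<le> CARD('n) - vec.dim C"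
proof -
  obtain S where S: "S \<subseteq> C" "vec.independent S" "C \<subseteq> vec.span S" "card S = vec.dim C"
    using vec.basis_exists by blast
  obtain B where B: "S \<subseteq> B" "B \<subseteq> S \<union> cart_basis" "vec.independent B" "S \<union> cart_basis \<subseteq> vec.span B"
    using vec.maximal_independent_subset_extend[of S "S \<union> cart_basis"] S(2) by blast
  have "UNIV = vec.span (cart_basis :: ('a ^ 'n) set)" by simp
  also have "\<dots> \<subseteq> vec.span B"
    using B(4) by (intro vec.span_minimal) auto
  finally have span_B: "vec.span B = UNIV" by auto
  define T where "T = B - S"
  have "card B = CARD('n)"
    using vec.basis_card_eq_dim[of B UNIV] B(3) span_B by (simp add: card_cart_basis)
  then have card_T: "card T = CARD('n) - vec.dim C"
    using S(4) B(1) by (simp add: T_def card_Diff_subset)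
  have "x \<in> vec.span (S \<union> T)"
    using span_B B(1) by (simp add: T_def Un_absorb1)
  then obtain c t where ct: "x = c + t" "c \<in> vec.span S" "t \<in> vec.span T"
    unfolding vec.span_Un by blast
  define I where "I = {i. axis i 1 \<in> T}"
  have "vec.subspace {y :: 'a ^ 'n. \<forall>i. i \<notin> I \<longrightarrow> y $ i = 0}"
    unfolding vec.subspace_def by auto
  moreover have "T \<subseteq> {y. \<forall>i. i \<notin> I \<longrightarrow> y $ i = 0}"
    using B(2) by (auto simp: T_def I_def cart_basis_def axis_def)
  ultimately have "vec.span T \<subseteq> {y. \<forall>i. i \<notin> I \<longrightarrow> y $ i = 0}"
    by (rule vec.span_minimal[rotated])
  then have "{i. t $ i \<noteq> 0} \<subseteq> I"
    using ct(3) by auto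
  then have "card {i. t $ i \<noteq> 0} \<le> card I"
    by (intro card_mono) auto
  also have "card I \<le> card T"
    by (rule card_inj_on_le[of "\<lambda>i. axis i 1"]) (auto simp: I_def inj_on_def axis_eq_axis)
  finally show ?thesis
    using that ct vec.span_subspace[OF S(1,3) assms] card_T by auto
qed

lemma rank_covering_radius_le:
  fixes C :: "('a::{field,finite} ^ 'n) set"
  assumes "C \<noteq> {}" "\<And>x. \<exists>c\<in>C. rk K (x - c) \<le> d"
  shows "rank_covering_radius K C \<le> d"
  unfolding rank_covering_radius_def using assms by (simp add: Min_le_iff)

lemma rank_covering_radius_covers:
  fixes C :: "('a::{field,finite} ^ 'n) set"
  assumes "C \<noteq> {}"
  obtains c where "c \<in> C" "rk K (x - c) \<le> rank_covering_radius K C"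
proof -
  have "Min ((\<lambda>c. rk K (x - c)) ` C) \<le> rank_covering_radius K C"
    unfolding rank_covering_radius_def by (rule Max_ge) auto
  then show ?thesis
    using assms that by (auto simp: Min_le_iff)
qed

lemma rank_covering_radius_le_codim:
  fixes C :: "('a::{field,finite} ^ 'n) set"
  assumes K: "is_subfield K" and C: "vec.subspace C"
  shows "rank_covering_radius K C \<le> CARD('n) - vec.dim C"
proof (rule rank_covering_radius_le)
  show "C \<noteq> {}"
    using vec.subspace_0[OF C] by blast
  show "\<exists>c\<in>C. rk K (x - c) \<le> CARD('n) - vec.dim C" for x
  proof -
    obtain c where "c \<in> C" "card {i. (x - c) $ i \<noteq> 0} \<le> CARD('n) - vec.dim C"
      using subspace_hamming_cover[OF C] by blast
    then show ?thesis
      using rk_le_card_nonzero[OF K, of "x - c"] by force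
  qed
qed

lemma card_vec_le_card_mult_rank_ball:
  fixes C :: "('a::{field,finite} ^ 'n) set"
  assumes "C \<noteq> {}"
  shows "CARD('a) ^ CARD('n) \<le> card C * card {y :: 'a ^ 'n. rk K y \<le> rank_covering_radius K C}"
proof -
  define B where "B = {y :: 'a ^ 'n. rk K y \<le> rank_covering_radius K C}"
  have "UNIV \<subseteq> (\<Union>c\<in>C. (+) c ` B)"
  proof
    fix x :: "'a ^ 'n"
    obtain c where "c \<in> C" "rk K (x - c) \<le> rank_covering_radius K C"
      using rank_covering_radius_covers[OF assms] by blast
    then show "x \<in> (\<Union>c\<in>C. (+) c ` B)"
      by (auto simp: B_def intro!: bexI[of _ c] image_eqI[of _ _ "x - c"])
  qed
  then have "CARD('a ^ 'n) \<le> card (\<Union>c\<in>C. (+) c ` B)"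
    by (intro card_mono) auto
  also have "\<dots> \<le> (\<Sum>c\<in>C. card ((+) c ` B))"
    by (rule card_UN_le) simp
  also have "\<dots> \<le> (\<Sum>c\<in>C. card B)"
    by (intro sum_mono card_image_le) simp
  finally show ?thesis
    by (simp add: B_def)
qed

lemma card_rank_ball_le_q_binomial:
  fixes K :: "'a::{field,finite} set"
  assumes K: "is_subfield K" and card: "CARD('a) = card K ^ m" and "p \<le> m"
  defines "Q \<equiv> real (card K)"
  shows "real (card {x :: 'a ^ 'n. rk K x \<le> p})
           \<le> Q ^ (p * CARD('n)) * (\<Prod>i<p. (Q ^ m - Q ^ i) / (Q ^ p - Q ^ i))"
proof -
  have "2 \<le> card K"
    by (rule card_subfield_ge_2[OF K])
  have "real (card K ^ p - card K ^ i) = Q ^ p - Q ^ i" "real (CARD('a) - card K ^ i) = Q ^ m - Q ^ i"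
    if "i < p" for i
    using that \<open>p \<le> m\<close> \<open>2 \<le> card K\<close> by (simp_all add: Q_def card of_nat_diff power_increasing)
  then have "real (\<Prod>i<p. card K ^ p - card K ^ i) = (\<Prod>i<p. Q ^ p - Q ^ i)"
    "real (\<Prod>i<p. CARD('a) - card K ^ i) = (\<Prod>i<p. Q ^ m - Q ^ i)"
    unfolding of_nat_prod by (auto intro: prod.cong)
  moreover have "real (card {x :: 'a ^ 'n. rk K x \<le> p} * (\<Prod>i<p. card K ^ p - card K ^ i))
                   \<le> real ((\<Prod>i<p. CARD('a) - card K ^ i) * (card K ^ p) ^ CARD('n))"
    unfolding of_nat_le_iff by (rule card_rk_le_mult_le[OF K card \<open>p \<le> m\<close>])
  ultimately have "real (card {x :: 'a ^ 'n. rk K x \<le> p}) * (\<Prod>i<p. Q ^ p - Q ^ i)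
                     \<le> (\<Prod>i<p. Q ^ m - Q ^ i) * Q ^ (p * CARD('n))"
    by (simp add: Q_def power_mult)
  moreover have "0 < (\<Prod>i<p. Q ^ p - Q ^ i)"
    using \<open>2 \<le> card K\<close> by (intro prod_pos) (auto simp: Q_def intro: power_strict_increasing)
  ultimately show ?thesis
    by (simp add: field_simps prod_dividef)
qed

lemma card_rank_ball_less:
  fixes K :: "'a::{field,finite} set"
  assumes K: "is_subfield K" and card: "CARD('a) = card K ^ m" and "p \<le> m"
  shows "real (card {x :: 'a ^ 'n. rk K x \<le> p})
           < real (card K) powr (real p * real CARD('n) + real p * (real m - real p) + sigma (card K))"
proof -
  define Q where "Q = real (card K)"
  have "2 \<le> card K"
    by (rule card_subfield_ge_2[OF K])
  then have Q: "2 \<le> Q" by (simp add: Q_def)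
  have "real (card {x :: 'a ^ 'n. rk K x \<le> p})
          \<le> Q ^ (p * CARD('n)) * (\<Prod>i<p. (Q ^ m - Q ^ i) / (Q ^ p - Q ^ i))"
    unfolding Q_def by (rule card_rank_ball_le_q_binomial[OF K card \<open>p \<le> m\<close>])
  also have "\<dots> \<le> Q ^ (p * CARD('n)) * (Q ^ (p * (m - p)) * (\<Prod>j\<in>{1..p}. 1 / (1 - (1 / Q) ^ j)))"
    using Q \<open>p \<le> m\<close> by (intro mult_left_mono q_binomial_le) auto
  also have "\<dots> < Q ^ (p * CARD('n)) * (Q ^ (p * (m - p)) * Q powr sigma (card K))"
    using Q prod_inverse_one_minus_power_less_powr_sigma[OF \<open>2 \<le> card K\<close>, of p]
    by (intro mult_strict_left_mono) (auto simp: Q_def)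
  also have "\<dots> = Q powr (real p * real CARD('n) + real p * (real m - real p) + sigma (card K))"
    using Q \<open>p \<le> m\<close> by (simp add: powr_add powr_realpow of_nat_diff flip: powr_realpow)
  finally show ?thesis
    by (simp add: Q_def)
qed

lemma rank_sphere_covering_bound:
  fixes K :: "'a::{field,finite} set" and C :: "('a ^ 'n) set"
  assumes K: "is_subfield K" and card: "CARD('a) = card K ^ m" and C: "vec.subspace C"
    and \<rho>: "rank_covering_radius K C = \<rho>" "\<rho> \<le> m"
  shows "real m * real CARD('n)
           < real m * real (vec.dim C) + real \<rho> * real CARD('n) + real \<rho> * (real m - real \<rho>) + sigma (card K)"
proof -
  define q n k where "q = card K" and "n = CARD('n)" and "k = vec.dim C"
  have "2 \<le> q"
    using card_subfield_ge_2[OF K] by (simp add: q_def)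
  have "C \<noteq> {}"
    using vec.subspace_0[OF C] by blast
  have "q ^ (m * n) \<le> q ^ (m * k) * card {y :: 'a ^ 'n. rk K y \<le> \<rho>}"
    using card_vec_le_card_mult_rank_ball[OF \<open>C \<noteq> {}\<close>, of K] card_vec_subspace[OF C] card \<rho>(1)
    by (simp add: q_def n_def k_def power_mult)
  then have "real q ^ (m * n) \<le> real q ^ (m * k) * real (card {y :: 'a ^ 'n. rk K y \<le> \<rho>})"
    by (metis of_nat_le_iff of_nat_mult of_nat_power)
  also have "\<dots> < real q ^ (m * k) * real q powr (real \<rho> * real n + real \<rho> * (real m - real \<rho>) + sigma q)"
    using card_rank_ball_less[OF K card \<rho>(2), where 'n = 'n] \<open>2 \<le> q\<close>
    by (intro mult_strict_left_mono) (auto simp: q_def n_def)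
  finally have "real q powr real (m * n)
                  < real q powr (real (m * k) + (real \<rho> * real n + real \<rho> * (real m - real \<rho>) + sigma q))"
    using \<open>2 \<le> q\<close> by (simp only: powr_add powr_realpow of_nat_0_less_iff)
  then show ?thesis
    using \<open>2 \<le> q\<close> by (simp add: q_def n_def k_def)
qed

theorem proposition13:
  fixes K :: "'a::{field,finite} set" and C :: "('a ^ 'n) set"
    and q m k \<rho> :: nat
  assumes "is_subfield K" and "card K = q" and "CARD('a) = q ^ m"
    and "CARD('n) \<le> m"
    and "vec.subspace C" and "vec.dim C = k"
    and "rank_covering_radius K C = \<rho>"
    and "0 < \<rho>" and "\<rho> < CARD('n)"
  shows "\<lfloor>real CARD('n) - real \<rho> - (real \<rho> * (real CARD('n) - real \<rho>) + sigma q) / real m\<rfloor> + 1 \<le> int k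
         \<and> k \<le> CARD('n) - \<rho>"
proof
  have K: "is_subfield K" and C: "vec.subspace C" by fact+
  show "k \<le> CARD('n) - \<rho>"
    using rank_covering_radius_le_codim[OF K C] assms(6-8) by simp
  have "\<rho> \<le> m"
    using assms(4,9) by simp
  then have "real m * real CARD('n) < real m * real k + real \<rho> * real CARD('n) + real \<rho> * (real m - real \<rho>) + sigma q"
    using rank_sphere_covering_bound[OF K _ C assms(7)] assms(2,3,6) by simp
  then have "real CARD('n) - real \<rho> - (real \<rho> * (real CARD('n) - real \<rho>) + sigma q) / real m < real k"
    using \<open>\<rho> \<le> m\<close> assms(8) by (simp add: field_simps)
  then have "\<lfloor>real CARD('n) - real \<rho> - (real \<rho> * (real CARD('n) - real \<rho>) + sigma q) / real m\<rfloor> < int k"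
    by (simp add: floor_less_iff)
  then show "\<lfloor>real CARD('n) - real \<rho> - (real \<rho> * (real CARD('n) - real \<rho>) + sigma q) / real m\<rfloor> + 1 \<le> int k"
    by simp
qed

end
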